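(* For the 0-1-loss $\ell_{0\text{-}1}(\mathrm{h},(x,y))=1-\mathrm{h}(y|x)$ and training instances $x_1,\dots,x_n$, the problem $\mathscr{P}_{x,\ell_{0\text{-}1}}^{\mathbf{a},\mathbf{b}}$ is equivalent to $$\mathscr{P}_{x,0\text{-}1}^{\mathbf{a},\mathbf{b}}:\ \min_{\boldsymbol{\mu},\boldsymbol{\eta}}\ \tfrac{1}{2}(\mathbf{b}-\mathbf{a})^{\mathrm{T}}\boldsymbol{\eta}-\tfrac{1}{2}(\mathbf{b}+\mathbf{a})^{\mathrm{T}}\boldsymbol{\mu}-\frac{1}{n}\sum_{i=1}^n\varphi_{0\text{-}1}(\boldsymbol{\mu},x_i)\ \text{ s.t. }\boldsymbol{\eta}+\boldsymbol{\mu}\succeq\mathbf{0},\ \boldsymbol{\eta}-\boldsymbol{\mu}\succeq\mathbf{0},$$ with $$\varphi_{0\text{-}1}(\boldsymbol{\mu},x)=\min_{\mathcal{C}\subseteq\mathcal{Y},\mathcal{C}\neq\emptyset}\frac{1-\sum_{y\in\mathcal{C}}\big(\Phi(x,y)^{\mathrm{T}}\boldsymbol{\mu}+1\big)}{|\mathcal{C}|}.$$ In addition, for a solution $\boldsymbol{\mu}^*,\boldsymbol{\eta}^*$ of $\mathscr{P}_{x,0\text{-}1}^{\mathbf{a},\mathbf{b}}$, the condition $\ell_{0\text{-}1}(\mathrm{h},(x,y))+\Phi(x,y)^{\mathrm{T}}\boldsymbol{\mu}^*+\varphi_{\ell_{0\text{-}1}}(\boldsymbol{\mu}^*,x)\leq0$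 for all $x,y$ (which makes $\mathrm{h}$ a 0-1-MRC for $\mathcal{U}_x^{\mathbf{a},\mathbf{b}}$) becomes $$\mathrm{h}(y|x)\geq \Phi(x,y)^{\mathrm{T}}\boldsymbol{\mu}^*+1+\varphi_{0\text{-}1}(\boldsymbol{\mu}^*,x)\quad\forall x\in\mathcal{X},y\in\mathcal{Y}.$$
   Context: Let $\mathcal{X},\mathcal{Y}$ be finite nonempty sets, $\mathcal{Y}=\{1,\dots,|\mathcal{Y}|\}$; $\Delta(\mathcal{Z})$ the probability distributions on a finite set $\mathcal{Z}$. A classification rule $\mathrm{h}$ assigns to each $x$ a distribution $\mathrm{h}(\cdot|x)\in\Delta(\mathcal{Y})$. For a score function $L$ (loss $\ell(\mathrm{h},(x,y))=L(\mathrm{h}(\cdot|x),y)$): $\Phi:\mathcal{X}\times\mathcal{Y}\to\mathbb{R}^m$ is a feature mapping, $\boldsymbol{\Phi}(x,\cdot)$ the $|\mathcal{Y}|\times m$ matrix with rows $\Phi(x,y)^{\mathrm{T}}$, $\mathbf{1}$ the all-ones vector, $\preceq,\succeq$ componentwise, $\mathcal{L}=\{\mathbf{c}\in\mathbb{R}^{|\mathcal{Y}|}:\exists\,\mathrm{q}\in\Delta(\mathcal{Y}),\ \mathbf{c}+(L(\mathrm{q},y))_{y}\preceq\mathbf{0}\}$, $\varphi_\ell(\boldsymbol{\mu},x)=\max\{\nu:\boldsymbol{\Phi}(x,\cdot)\boldsymbol{\mu}+\nu\mathbf{1}\in\mathcal{L}\}$, and $\mathscr{P}_{x,\ell}^{\mathbf{a},\mathbf{b}}$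 is $\min_{\boldsymbol{\mu},\boldsymbol{\eta}}\tfrac12(\mathbf{b}-\mathbf{a})^{\mathrm{T}}\boldsymbol{\eta}-\tfrac12(\mathbf{b}+\mathbf{a})^{\mathrm{T}}\boldsymbol{\mu}-\frac1n\sum_{i=1}^n\varphi_\ell(\boldsymbol{\mu},x_i)$ s.t. $\boldsymbol{\eta}\pm\boldsymbol{\mu}\succeq\mathbf{0}$. With $\mathrm{p}_n$ the empirical distribution of $x_1,\dots,x_n$, $\mathcal{U}_x^{\mathbf{a},\mathbf{b}}=\{\mathrm{p}\in\Delta(\mathcal{X}\times\mathcal{Y}):\mathbf{a}\preceq\mathbb{E}_{\mathrm{p}}\{\Phi\}\preceq\mathbf{b},\ \sum_y\mathrm{p}(x,y)=\mathrm{p}_n(x)\ \forall x\}$, and an $\ell$-MRC for $\mathcal{U}$ minimizes $\max_{\mathrm{p}\in\mathcal{U}}\sum_{x,y}\mathrm{p}(x,y)\ell(\mathrm{h},(x,y))$ over all classification rules. *)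

theory Defs
  imports "HOL-Analysis.Analysis"
begin

definition Delta :: "('y::finite \<Rightarrow> real) set" where
  "Delta = {q. (\<forall>y. 0 \<le> q y) \<and> sum q UNIV = 1}"

definition is_rule :: "('x \<Rightarrow> 'y::finite \<Rightarrow> real) \<Rightarrow> bool" where
  "is_rule h \<longleftrightarrow> (\<forall>x. h x \<in> Delta)"

definition L01 :: "('y \<Rightarrow> real) \<Rightarrow> 'y \<Rightarrow> real" where
  "L01 q y = 1 - q y"

definition loss :: "(('y \<Rightarrow> real) \<Rightarrow> 'y \<Rightarrow> real) \<Rightarrow> ('x \<Rightarrow> 'y \<Rightarrow> real) \<Rightarrow> 'x \<Rightarrow> 'y \<Rightarrow> real" where
  "loss L h x y = L (h x) y"

definition Lset :: "(('y::finite \<Rightarrow> real) \<Rightarrow> 'y \<Rightarrow> real) \<Rightarrow> ('y \<Rightarrow> real) set" where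
  "Lset L = {c. \<exists>q\<in>Delta. \<forall>y. c y + L q y \<le> 0}"

text \<open>\<phi>_\<ell>(\<mu>,x) = max{\<nu>. \<Phi>(x,\<cdot>)\<mu> + \<nu>1 \<in> \<L>} (written as a supremum).\<close>
definition phi_loss :: "(('y::finite \<Rightarrow> real) \<Rightarrow> 'y \<Rightarrow> real) \<Rightarrow> ('x \<Rightarrow> 'y \<Rightarrow> real^'m) \<Rightarrow> real^'m \<Rightarrow> 'x \<Rightarrow> real" where
  "phi_loss L Phi mu x = Sup {\<nu>. (\<lambda>y. Phi x y \<bullet> mu + \<nu>) \<in> Lset L}"

definition phi01 :: "('x \<Rightarrow> 'y::finite \<Rightarrow> real^'m) \<Rightarrow> real^'m \<Rightarrow> 'x \<Rightarrow> real" where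
  "phi01 Phi mu x =
     Min ((\<lambda>C. (1 - (\<Sum>y\<in>C. Phi x y \<bullet> mu + 1)) / real (card C)) ` {C. C \<noteq> {}})"

definition objective :: "(real^'m \<Rightarrow> 'x \<Rightarrow> real) \<Rightarrow> real^'m \<Rightarrow> real^'m \<Rightarrow> 'x list
     \<Rightarrow> real^'m \<Rightarrow> real^'m \<Rightarrow> real" where
  "objective phi a b xs mu eta =
     (1/2) * ((b - a) \<bullet> eta) - (1/2) * ((b + a) \<bullet> mu)
     - (1 / real (length xs)) * (\<Sum>i<length xs. phi mu (xs ! i))"

definition feasible :: "real^'m \<Rightarrow> real^'m \<Rightarrow> bool" where
  "feasible mu eta \<longleftrightarrow> (\<forall>i. 0 \<le> eta $ i + mu $ i \<and> 0 \<le> eta $ i - mu $ i)"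

definition is_solution :: "(real^'m \<Rightarrow> 'x \<Rightarrow> real) \<Rightarrow> real^'m \<Rightarrow> real^'m \<Rightarrow> 'x list
     \<Rightarrow> real^'m \<Rightarrow> real^'m \<Rightarrow> bool" where
  "is_solution phi a b xs mu eta \<longleftrightarrow> feasible mu eta \<and>
     (\<forall>mu' eta'. feasible mu' eta' \<longrightarrow> objective phi a b xs mu eta \<le> objective phi a b xs mu' eta')"

end

theory Submission
  imports Defs
begin

(* A vector c lies in the set \<L> of the 0-1 loss iff some distribution q dominates c + 1
   pointwise, i.e. iff the positive parts of c + 1 sum to at most 1, i.e. iff the sum of
   c y + 1 over y in C is at most 1 for every C.  For c = \<Phi>(x,.)\<mu> + \<nu> this bounds \<nu> by
   (1 - \<Sum>_{y\<in>C} (\<Phi>(x,y)\<mu> + 1)) / |C| for every nonempty C, so the largest admissible \<nu>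
   is exactly the minimum defining \<phi>_{0-1}. *)

lemma sum_max_0_le_iff:
  fixes d :: "'a \<Rightarrow> real"
  assumes "finite A"
  shows "(\<Sum>y\<in>A. max 0 (d y)) \<le> t \<longleftrightarrow> (\<forall>C\<subseteq>A. (\<Sum>y\<in>C. d y) \<le> t)"
proof
  assume le: "(\<Sum>y\<in>A. max 0 (d y)) \<le> t"
  show "\<forall>C\<subseteq>A. (\<Sum>y\<in>C. d y) \<le> t"
  proof (intro allI impI)
    fix C assume "C \<subseteq> A"
    have "(\<Sum>y\<in>C. d y) \<le> (\<Sum>y\<in>C. max 0 (d y))" by (intro sum_mono) simp
    also have "\<dots> \<le> (\<Sum>y\<in>A. max 0 (d y))"
      using \<open>C \<subseteq> A\<close> assms by (intro sum_mono2) auto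
    finally show "(\<Sum>y\<in>C. d y) \<le> t" using le by simp
  qed
next
  assume subset_sums: "\<forall>C\<subseteq>A. (\<Sum>y\<in>C. d y) \<le> t"
  have "(\<Sum>y\<in>A. max 0 (d y)) = (\<Sum>y\<in>{y\<in>A. 0 < d y}. d y)"
    using assms by (intro sum.mono_neutral_cong_right) auto
  also have "\<dots> \<le> t" using subset_sums by auto
  finally show "(\<Sum>y\<in>A. max 0 (d y)) \<le> t" .
qed

lemma ex_Delta_ge_iff:
  fixes d :: "'y::finite \<Rightarrow> real"
  shows "(\<exists>q\<in>Delta. \<forall>y. d y \<le> q y) \<longleftrightarrow> (\<Sum>y\<in>UNIV. max 0 (d y)) \<le> 1"
proof
  assume "\<exists>q\<in>Delta. \<forall>y. d y \<le> q y"
  then obtain q where "q \<in> Delta" and "\<forall>y. d y \<le> q y" by blast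
  then have "(\<Sum>y\<in>UNIV. max 0 (d y)) \<le> sum q UNIV"
    by (intro sum_mono) (auto simp: Delta_def)
  then show "(\<Sum>y\<in>UNIV. max 0 (d y)) \<le> 1" using \<open>q \<in> Delta\<close> by (simp add: Delta_def)
next
  define g where "g y = max 0 (d y)" for y
  assume "(\<Sum>y\<in>UNIV. max 0 (d y)) \<le> 1"
  then have slack: "0 \<le> (1 - sum g UNIV) / real CARD('y)" by (simp add: g_def)
  define q where "q y = g y + (1 - sum g UNIV) / real CARD('y)" for y
  have "sum q UNIV = 1" by (simp add: q_def sum.distrib)
  moreover have "0 \<le> q y" and "d y \<le> q y" for y
    using slack by (auto simp: q_def g_def)
  ultimately show "\<exists>q\<in>Delta. \<forall>y. d y \<le> q y" by (auto simp: Delta_def)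
qed

lemma shift_mem_Lset_L01_iff:
  fixes c :: "'y::finite \<Rightarrow> real"
  shows "(\<lambda>y. c y + \<nu>) \<in> Lset L01 \<longleftrightarrow>
    (\<forall>C. C \<noteq> {} \<longrightarrow> \<nu> \<le> (1 - (\<Sum>y\<in>C. c y + 1)) / real (card C))"
proof -
  have "(\<lambda>y. c y + \<nu>) \<in> Lset L01 \<longleftrightarrow> (\<exists>q\<in>Delta. \<forall>y. c y + 1 + \<nu> \<le> q y)"
    by (simp add: Lset_def L01_def algebra_simps)
  also have "\<dots> \<longleftrightarrow> (\<forall>C. (\<Sum>y\<in>C. c y + 1) + real (card C) * \<nu> \<le> 1)"
    by (simp add: ex_Delta_ge_iff sum_max_0_le_iff sum.distrib)
  also have "\<dots> \<longleftrightarrow> (\<forall>C. C \<noteq> {} \<longrightarrow> \<nu> \<le> (1 - (\<Sum>y\<in>C. c y + 1)) / real (card C))"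
  proof -
    have "(\<Sum>y\<in>C. c y + 1) + real (card C) * \<nu> \<le> 1 \<longleftrightarrow>
      (C \<noteq> {} \<longrightarrow> \<nu> \<le> (1 - (\<Sum>y\<in>C. c y + 1)) / real (card C))" for C :: "'y set"
    proof (cases "C = {}")
      case False
      then have "0 < real (card C)" by (simp add: card_gt_0_iff)
      then show ?thesis using False by (simp add: le_divide_eq algebra_simps)
    qed simp
    then show ?thesis by blast
  qed
  finally show ?thesis .
qed

lemma phi_loss_L01_eq_phi01: "phi_loss L01 Phi mu x = phi01 Phi mu x"
proof -
  define f where "f C = (1 - (\<Sum>y\<in>C. Phi x y \<bullet> mu + 1)) / real (card C)" for C
  have "f ` {C. C \<noteq> {}} \<noteq> {}" by auto
  then have "\<nu> \<le> Min (f ` {C. C \<noteq> {}}) \<longleftrightarrow> (\<forall>C. C \<noteq> {} \<longrightarrow> \<nu> \<le> f C)" for \<nu>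
    by (subst Min_ge_iff) auto
  then have "{\<nu>. (\<lambda>y. Phi x y \<bullet> mu + \<nu>) \<in> Lset L01} = {..Min (f ` {C. C \<noteq> {}})}"
    by (auto simp only: shift_mem_Lset_L01_iff f_def atMost_iff mem_Collect_eq)
  then show ?thesis by (simp add: phi_loss_def phi01_def f_def)
qed

theorem corollary7:
  fixes Phi :: "'x::finite \<Rightarrow> 'y::finite \<Rightarrow> real^'m"
    and a b :: "real^'m" and xs :: "'x list"
  assumes "xs \<noteq> []"
  shows "(\<forall>mu x. phi_loss L01 Phi mu x = phi01 Phi mu x)
    \<and> (\<forall>mu eta. objective (phi_loss L01 Phi) a b xs mu eta = objective (phi01 Phi) a b xs mu eta)
    \<and> (\<forall>mu eta. is_solution (phi_loss L01 Phi) a b xs mu eta \<longleftrightarrow> is_solution (phi01 Phi) a b xs mu eta)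
    \<and> (\<forall>mus etas h. is_solution (phi01 Phi) a b xs mus etas \<longrightarrow> is_rule h \<longrightarrow>
         ((\<forall>x y. loss L01 h x y + Phi x y \<bullet> mus + phi_loss L01 Phi mus x \<le> 0)
          \<longleftrightarrow> (\<forall>x y. h x y \<ge> Phi x y \<bullet> mus + 1 + phi01 Phi mus x)))"
proof -
  have phi_eq: "phi_loss L01 Phi = phi01 Phi" by (intro ext phi_loss_L01_eq_phi01)
  have rearrange: "1 - u + v + w \<le> 0 \<longleftrightarrow> v + 1 + w \<le> u" for u v w :: real by linarith
  show ?thesis unfolding phi_eq loss_def L01_def rearrange by simp
qed

end
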